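(* The only pair of integers $(x,y)$ satisfying \[\frac{2x+y}{\sqrt{3y^2-4y+2}}=\frac{-x-2y}{\sqrt{3x^2-4x+2}}\] is $x=y=0$.
   Context: Square roots denote positive square roots (the radicands are positive for all integers $x,y$). *)

theory Defs
  imports Complex_Main
begin

end

theory Submission
  imports Defs
begin

text \<open>Both radicands are positive, so squaring the equation and clearing denominators gives
  a polynomial identity between integers. Its two sides differ by \<open>(x - y)\<close> times a cubic
  in \<open>s = x + y\<close> and \<open>p = x y\<close>. When \<open>x \<noteq> y\<close> the cubic forces \<open>3 s - 1\<close> to divide \<open>s\<close>,
  hence \<open>s = 0\<close> and then \<open>p = 0\<close>, i.e. \<open>x = y = 0\<close>. When \<open>x = y\<close> the original equation
  reads \<open>3 x / r = - 3 x / r\<close> with \<open>r > 0\<close>, so again \<open>x = 0\<close>.\<close>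

lemma three_square_minus_four_plus_two_pos:
  fixes t :: real
  shows "3 * t^2 - 4 * t + 2 > 0"
proof -
  have "3 * t^2 - 4 * t + 2 = 3 * (t - 2/3)^2 + 2/3"
    by (simp add: power2_eq_square algebra_simps)
  also have "\<dots> > 0"
    by (simp add: add_nonneg_pos)
  finally show ?thesis .
qed

lemma divide_sqrt_eq_imp_square_mult_eq:
  fixes a b A B :: real
  assumes "A > 0" "B > 0" "a / sqrt A = b / sqrt B"
  shows "a^2 * B = b^2 * A"
proof -
  have "(a / sqrt A)^2 = (b / sqrt B)^2"
    using assms(3) by simp
  then have "a^2 / A = b^2 / B"
    using assms(1,2) by (simp add: power_divide)
  then show ?thesis
    using assms(1,2) by (simp add: field_simps)
qed

lemma squared_equation_difference_factor:
  fixes x y :: "'a :: comm_ring_1"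
  shows "(2*x + y)^2 * (3*x^2 - 4*x + 2) - (x + 2*y)^2 * (3*y^2 - 4*y + 2)
       = (x - y) * (12*(x+y)^3 - 12*(x*y)*(x+y) - 16*(x+y)^2 + 4*(x*y) + 6*(x+y))"
  by (simp add: power2_eq_square power3_eq_cube) (simp add: algebra_simps)

lemma cubic_in_sum_product_int_zero:
  fixes s p :: int
  assumes "12*s^3 - 12*p*s - 16*s^2 + 4*p + 6*s = 0"
  shows "s = 0 \<and> p = 0"
proof -
  have p_eq: "2*(3*s - 1)*p = s*(3*s - 1)*(2*s - 2) + s"
    using assms by algebra
  then have "s = (3*s - 1) * (2*p - s*(2*s - 2))"
    by (simp add: algebra_simps)
  then have "(3*s - 1) dvd s"
    by (metis dvd_triv_left)
  then have "(3*s - 1) dvd (3*s - (3*s - 1))"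
    by (meson dvd_diff dvd_mult dvd_refl)
  then have "\<bar>3*s - 1\<bar> = 1"
    by simp
  then have "s = 0"
    by arith
  with p_eq show ?thesis
    by simp
qed

lemma squared_equation_int_cases:
  fixes x y :: int
  assumes "(2*x + y)^2 * (3*x^2 - 4*x + 2) = (x + 2*y)^2 * (3*y^2 - 4*y + 2)"
  shows "x = y \<or> (x = 0 \<and> y = 0)"
proof (cases "x = y")
  case False
  with assms squared_equation_difference_factor[of x y]
  have "12*(x+y)^3 - 12*(x*y)*(x+y) - 16*(x+y)^2 + 4*(x*y) + 6*(x+y) = 0"
    by simp
  then have "x + y = 0 \<and> x * y = 0"
    by (rule cubic_in_sum_product_int_zero)
  then show ?thesis
    by auto
qed simp

theorem proposition8:
  fixes x y :: int
  shows "(2 * x + y) / sqrt (3 * y^2 - 4 * y + 2) = (- x - 2 * y) / sqrt (3 * x^2 - 4 * x + 2)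
         \<longleftrightarrow> (x = 0 \<and> y = 0)"
proof
  assume eq: "(2 * x + y) / sqrt (3 * y^2 - 4 * y + 2) = (- x - 2 * y) / sqrt (3 * x^2 - 4 * x + 2)"
  have pos_x: "real_of_int (3 * x^2 - 4 * x + 2) > 0" and pos_y: "real_of_int (3 * y^2 - 4 * y + 2) > 0"
    using three_square_minus_four_plus_two_pos[of "real_of_int x"]
      three_square_minus_four_plus_two_pos[of "real_of_int y"] by simp_all
  from divide_sqrt_eq_imp_square_mult_eq[OF pos_y pos_x eq]
  have "real_of_int ((2*x + y)^2 * (3*x^2 - 4*x + 2)) = real_of_int ((x + 2*y)^2 * (3*y^2 - 4*y + 2))"
    by (simp add: power2_eq_square algebra_simps)
  then have "x = y \<or> (x = 0 \<and> y = 0)"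
    by (intro squared_equation_int_cases) (simp only: of_int_eq_iff)
  moreover have "x = 0" if "x = y"
  proof -
    from eq that have "3 * x / sqrt (3 * x^2 - 4 * x + 2) = - (3 * x) / sqrt (3 * x^2 - 4 * x + 2)"
      by simp
    with pos_x show ?thesis
      by (simp add: divide_minus_left)
  qed
  ultimately show "x = 0 \<and> y = 0"
    by auto
qed simp

end
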